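(* Let $\mu:\mathbb{R}^{n\times n}\to\mathbb{R}$ be the matrix measure induced by an orthant-monotonic norm on $\mathbb{R}^n$, and let $A\in\mathbb{R}^{n\times n}$. If $\mu(A)<0$, then every diagonal entry $a_{ii}$ of $A$ is negative.
   Context: For a vector norm $|\cdot|$ on $\mathbb{R}^n$, the induced matrix norm is $\|A\|=\max_{|x|=1}|Ax|$ and the induced matrix measure is $\mu(A)=\lim_{\varepsilon\to0^+}(\|I_n+\varepsilon A\|-1)/\varepsilon$. A norm $|\cdot|$ on $\mathbb{R}^n$ is orthant-monotonic if for all $x,y\in\mathbb{R}^n$: whenever $x_iy_i\ge 0$ and $|x_i|\le|y_i|$ for all $i$, then $|x|\le|y|$. *)

theory Defs
  imports "HOL-Analysis.Analysis"
begin

definition is_vnorm :: "(real ^ 'n \<Rightarrow> real) \<Rightarrow> bool" where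
  "is_vnorm N \<longleftrightarrow>
     (\<forall>x. 0 \<le> N x) \<and> (\<forall>x. N x = 0 \<longleftrightarrow> x = 0) \<and>
     (\<forall>c x. N (c *\<^sub>R x) = \<bar>c\<bar> * N x) \<and>
     (\<forall>x y. N (x + y) \<le> N x + N y)"

definition orthant_monotonic :: "(real ^ 'n \<Rightarrow> real) \<Rightarrow> bool" where
  "orthant_monotonic N \<longleftrightarrow>
     (\<forall>x y. (\<forall>i. x $ i * y $ i \<ge> 0 \<and> \<bar>x $ i\<bar> \<le> \<bar>y $ i\<bar>) \<longrightarrow> N x \<le> N y)"

definition induced_norm :: "(real ^ 'n \<Rightarrow> real) \<Rightarrow> real ^ 'n ^ 'n \<Rightarrow> real" where
  "induced_norm N A = Sup {N (A *v x) | x. N x = 1}"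

definition matrix_measure :: "(real ^ 'n \<Rightarrow> real) \<Rightarrow> real ^ 'n ^ 'n \<Rightarrow> real" where
  "matrix_measure N A =
     Lim (at_right 0) (\<lambda>\<epsilon>. (induced_norm N (mat 1 + \<epsilon> *\<^sub>R A) - 1) / \<epsilon>)"

end

(*
  The map e \<mapsto> ||I + eA|| is convex with value 1 at e = 0, so its difference
  quotient at 0 decreases to mu(A) as e \<rightarrow> 0+.  Testing I + eA on the i-th unit
  vector and discarding all coordinates but the i-th, which orthant-monotonicity
  allows, gives ||I + eA|| \<ge> |1 + e a_ii|.  Hence every difference quotient is at
  least a_ii, and so a_ii \<le> mu(A) < 0.
*)
theory Submission
  imports Defs
begin

lemma vnorm_nonneg: "is_vnorm N \<Longrightarrow> 0 \<le> N x"
  unfolding is_vnorm_def by blast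

lemma vnorm_eq_0_iff: "is_vnorm N \<Longrightarrow> N x = 0 \<longleftrightarrow> x = 0"
  unfolding is_vnorm_def by blast

lemma vnorm_scaleR: "is_vnorm N \<Longrightarrow> N (c *\<^sub>R x) = \<bar>c\<bar> * N x"
  unfolding is_vnorm_def by blast

lemma vnorm_triangle: "is_vnorm N \<Longrightarrow> N (x + y) \<le> N x + N y"
  unfolding is_vnorm_def by blast

lemma vnorm_zero: "is_vnorm N \<Longrightarrow> N 0 = 0"
  by (simp add: vnorm_eq_0_iff)

lemma vnorm_pos: "is_vnorm N \<Longrightarrow> x \<noteq> 0 \<Longrightarrow> 0 < N x"
  by (simp add: order_less_le vnorm_nonneg vnorm_eq_0_iff)

lemma vnorm_minus_commute:
  assumes "is_vnorm N"
  shows "N (x - y) = N (y - x)"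
  using vnorm_scaleR[OF assms, of "-1" "y - x"] by simp

lemma vnorm_sum_le:
  assumes "is_vnorm N"
  shows "N (sum f S) \<le> (\<Sum>i\<in>S. N (f i))"
proof (induction S rule: infinite_finite_induct)
  case (insert x F)
  then show ?case using vnorm_triangle[OF assms, of "f x" "sum f F"] by simp
qed (simp_all add: vnorm_zero[OF assms])

lemma vnorm_le_norm:
  fixes N :: "real ^ 'n \<Rightarrow> real"
  assumes "is_vnorm N"
  shows "\<exists>C\<ge>0. \<forall>x. N x \<le> C * norm x"
proof (intro exI conjI allI)
  define C where "C = (\<Sum>i\<in>UNIV. N (axis i (1::real)))"
  show "0 \<le> C"
    unfolding C_def by (intro sum_nonneg vnorm_nonneg[OF assms])
  fix x :: "real ^ 'n"
  have "N x = N (\<Sum>i\<in>UNIV. (x $ i) *\<^sub>R axis i 1)"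
    using basis_expansion[of x] by (simp add: scalar_mult_eq_scaleR)
  also have "\<dots> \<le> (\<Sum>i\<in>UNIV. \<bar>x $ i\<bar> * N (axis i 1))"
    using vnorm_sum_le[OF assms, of "\<lambda>i. (x $ i) *\<^sub>R axis i 1" UNIV]
    by (simp add: vnorm_scaleR[OF assms])
  also have "\<dots> \<le> (\<Sum>i\<in>UNIV. norm x * N (axis i 1))"
    by (intro sum_mono mult_right_mono component_le_norm_cart vnorm_nonneg[OF assms])
  also have "\<dots> = C * norm x"
    by (simp add: C_def sum_distrib_left mult.commute)
  finally show "N x \<le> C * norm x" .
qed

lemma vnorm_continuous_on:
  fixes N :: "real ^ 'n \<Rightarrow> real"
  assumes "is_vnorm N"
  shows "continuous_on S N"
proof -
  obtain C where "0 \<le> C" and C: "\<And>x. N x \<le> C * norm x"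
    using vnorm_le_norm[OF assms] by blast
  have "dist (N x) (N y) \<le> C * dist x y" for x y
  proof -
    have "N x \<le> N y + N (x - y)" "N y \<le> N x + N (y - x)"
      using vnorm_triangle[OF assms, of y "x - y"] vnorm_triangle[OF assms, of x "y - x"]
      by simp_all
    then show ?thesis
      using C[of "x - y"] vnorm_minus_commute[OF assms, of x y]
      by (simp add: dist_real_def dist_norm abs_le_iff)
  qed
  then have "C-lipschitz_on S N"
    using \<open>0 \<le> C\<close> by (intro lipschitz_onI)
  then show ?thesis
    by (rule lipschitz_on_continuous_on)
qed

lemma norm_le_vnorm:
  fixes N :: "real ^ 'n \<Rightarrow> real"
  assumes "is_vnorm N"
  shows "\<exists>c>0. \<forall>x. c * norm x \<le> N x"
proof -
  have "axis undefined 1 \<in> sphere (0::real ^ 'n) 1"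
    by (simp add: norm_axis_1)
  then obtain z where z: "z \<in> sphere 0 1" and z_min: "\<And>y. y \<in> sphere 0 1 \<Longrightarrow> N z \<le> N y"
    using continuous_attains_inf[OF compact_sphere _ vnorm_continuous_on[OF assms]] by blast
  have "N z * norm x \<le> N x" for x
  proof (cases "x = 0")
    case False
    then have "N z \<le> N ((1 / norm x) *\<^sub>R x)"
      by (intro z_min) simp
    also have "\<dots> = N x / norm x"
      by (simp add: vnorm_scaleR[OF assms])
    finally show ?thesis
      using False by (simp add: field_simps)
  qed (simp add: vnorm_zero[OF assms])
  moreover have "0 < N z"
    using z by (intro vnorm_pos[OF assms]) auto
  ultimately show ?thesis by blast
qed

lemma vnorm_unit_exists:
  fixes N :: "real ^ 'n \<Rightarrow> real"
  assumes "is_vnorm N"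
  shows "\<exists>x. N x = 1"
proof
  have "0 < N (axis undefined 1 :: real ^ 'n)"
    by (intro vnorm_pos[OF assms]) (simp add: axis_eq_0_iff)
  then show "N ((1 / N (axis undefined 1)) *\<^sub>R (axis undefined 1 :: real ^ 'n)) = 1"
    by (simp add: vnorm_scaleR[OF assms])
qed

lemma orthant_monotonic_axis_le:
  assumes "orthant_monotonic N"
  shows "N (axis i (x $ i)) \<le> N x"
  using assms unfolding orthant_monotonic_def by (auto simp: axis_def)

lemma vnorm_matrix_vector_bounded:
  fixes N :: "real ^ 'n \<Rightarrow> real" and B :: "real ^ 'n ^ 'n"
  assumes "is_vnorm N"
  shows "bdd_above {N (B *v x) | x. N x = 1}"
proof -
  obtain C where "0 \<le> C" and C: "\<And>x. N x \<le> C * norm x"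
    using vnorm_le_norm[OF assms] by blast
  obtain c where "0 < c" and c: "\<And>x. c * norm x \<le> N x"
    using norm_le_vnorm[OF assms] by blast
  have "N (B *v x) \<le> C * (onorm ((*v) B) / c)" if "N x = 1" for x
  proof -
    have "N (B *v x) \<le> C * norm (B *v x)"
      by (rule C)
    also have "\<dots> \<le> C * (onorm ((*v) B) * norm x)"
      using \<open>0 \<le> C\<close> by (intro mult_left_mono onorm matrix_vector_mul_bounded_linear)
    also have "norm x \<le> 1 / c"
      using c[of x] \<open>0 < c\<close> that by (simp add: field_simps)
    then have "C * (onorm ((*v) B) * norm x) \<le> C * (onorm ((*v) B) * (1 / c))"
      using \<open>0 \<le> C\<close> onorm_pos_le[OF matrix_vector_mul_bounded_linear]
      by (intro mult_left_mono) auto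
    finally show ?thesis by simp
  qed
  then show ?thesis
    unfolding bdd_above_def by blast
qed

lemma induced_norm_upper:
  assumes "is_vnorm N" and "N x = 1"
  shows "N (B *v x) \<le> induced_norm N B"
  unfolding induced_norm_def using assms
  by (intro cSup_upper vnorm_matrix_vector_bounded) auto

lemma induced_norm_least:
  assumes "is_vnorm N" and "\<And>x. N x = 1 \<Longrightarrow> N (B *v x) \<le> K"
  shows "induced_norm N B \<le> K"
  unfolding induced_norm_def using assms vnorm_unit_exists[OF assms(1)]
  by (intro cSup_least) auto

lemma vnorm_matrix_vector_le:
  assumes "is_vnorm N"
  shows "N (B *v x) \<le> induced_norm N B * N x"
proof (cases "x = 0")
  case False
  then have "0 < N x"
    by (rule vnorm_pos[OF assms])
  then have "N (B *v ((1 / N x) *\<^sub>R x)) \<le> induced_norm N B"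
    by (intro induced_norm_upper[OF assms]) (simp add: vnorm_scaleR[OF assms])
  with \<open>0 < N x\<close> show ?thesis
    by (simp add: vnorm_scaleR[OF assms] matrix_vector_mult_scaleR field_simps)
qed (simp add: vnorm_zero[OF assms])

lemma induced_norm_id:
  assumes "is_vnorm N"
  shows "induced_norm N (mat 1) = 1"
proof -
  have "{N (mat 1 *v x) | x. N x = 1} = {1}"
    using vnorm_unit_exists[OF assms] by auto
  then show ?thesis
    unfolding induced_norm_def by simp
qed

lemma induced_norm_scaleR_add_le:
  assumes "is_vnorm N" and "0 \<le> s" and "0 \<le> t"
  shows "induced_norm N (s *\<^sub>R B + t *\<^sub>R D) \<le> s * induced_norm N B + t * induced_norm N D"
proof (rule induced_norm_least[OF assms(1)])
  fix x assume x: "N x = 1"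
  have "N ((s *\<^sub>R B + t *\<^sub>R D) *v x) = N (s *\<^sub>R (B *v x) + t *\<^sub>R (D *v x))"
    by (simp add: matrix_vector_mult_add_rdistrib scaleR_matrix_vector_assoc)
  also have "\<dots> \<le> s * N (B *v x) + t * N (D *v x)"
    using vnorm_triangle[OF assms(1), of "s *\<^sub>R (B *v x)" "t *\<^sub>R (D *v x)"] assms(2,3)
    by (simp add: vnorm_scaleR[OF assms(1)])
  also have "\<dots> \<le> s * induced_norm N B + t * induced_norm N D"
    using induced_norm_upper[OF assms(1) x] assms(2,3) by (intro add_mono mult_left_mono)
  finally show "N ((s *\<^sub>R B + t *\<^sub>R D) *v x) \<le> s * induced_norm N B + t * induced_norm N D" .
qed

lemma induced_norm_ge_diag:
  fixes N :: "real ^ 'n \<Rightarrow> real" and B :: "real ^ 'n ^ 'n"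
  assumes "is_vnorm N" and "orthant_monotonic N"
  shows "\<bar>B $ i $ i\<bar> \<le> induced_norm N B"
proof -
  let ?u = "axis i 1 :: real ^ 'n"
  have "0 < N ?u"
    by (intro vnorm_pos[OF assms(1)]) (simp add: axis_eq_0_iff)
  have "axis i (B $ i $ i) = B $ i $ i *\<^sub>R ?u"
    by (simp add: axis_def vec_eq_iff)
  then have "\<bar>B $ i $ i\<bar> * N ?u = N (axis i ((B *v ?u) $ i))"
    by (simp add: matrix_vector_mult_basis column_def vnorm_scaleR[OF assms(1)])
  also have "\<dots> \<le> N (B *v ?u)"
    by (rule orthant_monotonic_axis_le[OF assms(2)])
  also have "\<dots> \<le> induced_norm N B * N ?u"
    by (rule vnorm_matrix_vector_le[OF assms(1)])
  finally show ?thesis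
    using \<open>0 < N ?u\<close> by simp
qed

lemma induced_norm_difference_quotient_mono:
  assumes "is_vnorm N" and "0 < a" and "a \<le> b"
  shows "(induced_norm N (mat 1 + a *\<^sub>R A) - 1) / a \<le> (induced_norm N (mat 1 + b *\<^sub>R A) - 1) / b"
proof -
  have "0 < b"
    using assms by simp
  have convex_comb: "mat 1 + a *\<^sub>R A = (a / b) *\<^sub>R (mat 1 + b *\<^sub>R A) + (1 - a / b) *\<^sub>R mat 1"
    using \<open>0 < b\<close> by (simp add: algebra_simps)
  have "induced_norm N (mat 1 + a *\<^sub>R A)
      \<le> (a / b) * induced_norm N (mat 1 + b *\<^sub>R A) + (1 - a / b) * induced_norm N (mat 1)"
    unfolding convex_comb using assms \<open>0 < b\<close>
    by (intro induced_norm_scaleR_add_le[OF assms(1)]) auto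
  then have "induced_norm N (mat 1 + a *\<^sub>R A) - 1 \<le> (a / b) * (induced_norm N (mat 1 + b *\<^sub>R A) - 1)"
    by (simp add: induced_norm_id[OF assms(1)] algebra_simps)
  then have "(induced_norm N (mat 1 + a *\<^sub>R A) - 1) / a
      \<le> (a / b) * (induced_norm N (mat 1 + b *\<^sub>R A) - 1) / a"
    using assms by (intro divide_right_mono) auto
  then show ?thesis
    using assms by simp
qed

lemma induced_norm_difference_quotient_lower:
  assumes "is_vnorm N" and "0 < a"
  shows "- induced_norm N (- A) \<le> (induced_norm N (mat 1 + a *\<^sub>R A) - 1) / a"
proof -
  have split: "mat 1 = 1 *\<^sub>R (mat 1 + a *\<^sub>R A) + a *\<^sub>R (- A)"
    by (simp add: algebra_simps)
  have "induced_norm N (mat 1) \<le> 1 * induced_norm N (mat 1 + a *\<^sub>R A) + a * induced_norm N (- A)"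
    using assms by (subst split, intro induced_norm_scaleR_add_le[OF assms(1)]) auto
  then show ?thesis
    using assms by (simp add: induced_norm_id[OF assms(1)] field_simps)
qed

lemma matrix_measure_tendsto:
  assumes "is_vnorm N"
  shows "((\<lambda>e. (induced_norm N (mat 1 + e *\<^sub>R A) - 1) / e) \<longlongrightarrow> matrix_measure N A) (at_right 0)"
proof -
  let ?q = "\<lambda>e. (induced_norm N (mat 1 + e *\<^sub>R A) - 1) / e"
  have "(?q \<longlongrightarrow> Inf (?q ` ({0<..} \<inter> UNIV))) (at 0 within ({0<..} \<inter> UNIV))"
    using induced_norm_difference_quotient_mono[OF assms]
      induced_norm_difference_quotient_lower[OF assms]
    by (intro Lim_right_bound) auto
  then have "(?q \<longlongrightarrow> Inf (?q ` {0<..})) (at_right 0)"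
    by simp
  moreover from this have "matrix_measure N A = Inf (?q ` {0<..})"
    unfolding matrix_measure_def by (intro tendsto_Lim) auto
  ultimately show ?thesis by simp
qed

lemma diag_le_matrix_measure:
  assumes "is_vnorm N" and "orthant_monotonic N"
  shows "A $ i $ i \<le> matrix_measure N A"
proof (rule tendsto_lowerbound[OF matrix_measure_tendsto[OF assms(1)]])
  have quotient_ge: "A $ i $ i \<le> (induced_norm N (mat 1 + e *\<^sub>R A) - 1) / e" if "0 < e" for e
  proof -
    have "1 + e * A $ i $ i \<le> induced_norm N (mat 1 + e *\<^sub>R A)"
      using induced_norm_ge_diag[OF assms, of "mat 1 + e *\<^sub>R A" i] by (simp add: mat_def)
    with that show ?thesis
      by (simp add: field_simps)
  qed
  show "\<forall>\<^sub>F e in at_right 0. A $ i $ i \<le> (induced_norm N (mat 1 + e *\<^sub>R A) - 1) / e"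
    by (rule eventually_mono[OF eventually_at_right_less quotient_ge])
qed simp

theorem proposition2:
  fixes N :: "real ^ 'n \<Rightarrow> real" and A :: "real ^ 'n ^ 'n"
  assumes "is_vnorm N" and "orthant_monotonic N"
    and "matrix_measure N A < 0"
  shows "\<forall>i. A $ i $ i < 0"
  using diag_le_matrix_measure[OF assms(1,2)] assms(3) by (meson le_less_trans)

end
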